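(* There exists an infinite class of feasible configurations of size $n=4$ such that, for each configuration $G$ of this class, every dedicated leader election algorithm for $G$ takes time $\Omega(\sigma)$, where $\sigma$ is the span of $G$.
   Context: Model. A configuration is a finite simple undirected connected graph $G$ in which each node $v$ is tagged with a non-negative integer $t_v$ (wakeup tag); smallest tag $0$, span $\sigma$ = largest tag; size = number of nodes. Nodes are anonymous and communicate in synchronous global rounds. A node $v$ wakes up in the first global round $r\le t_v$ in which it receives a message, if any, and otherwise in global round $t_v$; its local clock is $0$ in its wakeup round, it acts from local round $1$, and nodes do not know the global clock. In each round a node transmits a message to all neighbours, listens, or terminates. A listening node receives $M$ if exactly one neighbour transmits ($M$), hears collision noise (distinct from silence and messages) if at least two neighbours transmit, and silence otherwise; a transmitting node hears nothing. A DRIP is a common function mapping a node's history (what it heard in each local round $0,\ldots,i-1$, including whether/by which message it was woken) to its action in local round $i\ge1$, with every node eventually terminating permanently; a decision function maps each node's final history to $\{0,1\}$; a dedicated leader election algorithm for $G$ is a DRIP plus decision function such that exactly one node of $G$ outputs $1$; $G$ is feasible if one exists. The time of such an algorithm is the number of rounds until the nodes terminate. *)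

theory Defs
  imports Complex_Main
begin

definition is_config :: "nat set \<Rightarrow> (nat \<Rightarrow> nat \<Rightarrow> bool) \<Rightarrow> (nat \<Rightarrow> nat) \<Rightarrow> bool" where
  "is_config V E t \<longleftrightarrow>
     finite V \<and> V \<noteq> {} \<and>
     (\<forall>x y. E x y \<longrightarrow> x \<in> V \<and> y \<in> V \<and> x \<noteq> y \<and> E y x) \<and>
     (\<forall>x\<in>V. \<forall>y\<in>V. (x, y) \<in> {(a, b). E a b}\<^sup>*) \<and>
     (\<exists>v\<in>V. t v = 0) \<and>
     (\<forall>v. v \<notin> V \<longrightarrow> t v = 0)"

definition span :: "nat set \<Rightarrow> (nat \<Rightarrow> nat) \<Rightarrow> nat" where
  "span V t = Max (t ` V)"

text \<open>What a node hears/records in a local round.  Entry 0 of a history records the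
wakeup (spontaneous, or by which message).  Sent = the node transmitted (hears nothing).\<close>
datatype 'm obs = WokeSpont | WokeBy 'm | Silence | Noise | Heard 'm | Sent

datatype 'm act = Transmit 'm | Listen | Terminate

datatype 'm nstate = Asleep | Active "'m obs list" | Done "'m obs list"

definition transmits :: "('m obs list \<Rightarrow> 'm act) \<Rightarrow> 'm nstate \<Rightarrow> 'm option" where
  "transmits A s = (case s of Active h \<Rightarrow> (case A h of Transmit m \<Rightarrow> Some m | _ \<Rightarrow> None) | _ \<Rightarrow> None)"

definition received :: "('m obs list \<Rightarrow> 'm act) \<Rightarrow> (nat \<Rightarrow> nat \<Rightarrow> bool) \<Rightarrow> (nat \<Rightarrow> 'm nstate) \<Rightarrow> nat \<Rightarrow> 'm obs" where
  "received A E S v =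
     (let T = {u. E v u \<and> transmits A (S u) \<noteq> None} in
      if T = {} then Silence
      else if card T = 1 then Heard (the (transmits A (S (the_elem T))))
      else Noise)"

text \<open>State of node v at the end of global round Suc r, given the states S at the end of round r.\<close>
definition step :: "('m obs list \<Rightarrow> 'm act) \<Rightarrow> (nat \<Rightarrow> nat \<Rightarrow> bool) \<Rightarrow> (nat \<Rightarrow> nat) \<Rightarrow> nat
                    \<Rightarrow> (nat \<Rightarrow> 'm nstate) \<Rightarrow> nat \<Rightarrow> 'm nstate" where
  "step A E t r S v =
     (case S v of
        Asleep \<Rightarrow> (case received A E S v of
                     Heard m \<Rightarrow> Active [WokeBy m]
                   | _ \<Rightarrow> (if t v = Suc r then Active [WokeSpont] else Asleep))
      | Active h \<Rightarrow> (case A h of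
                     Terminate \<Rightarrow> Done h
                   | Transmit m \<Rightarrow> Active (h @ [Sent])
                   | Listen \<Rightarrow> Active (h @ [received A E S v]))
      | Done h \<Rightarrow> Done h)"

text \<open>exec A E t r v = state of node v at the end of global round r.\<close>
primrec exec :: "('m obs list \<Rightarrow> 'm act) \<Rightarrow> (nat \<Rightarrow> nat \<Rightarrow> bool) \<Rightarrow> (nat \<Rightarrow> nat) \<Rightarrow> nat \<Rightarrow> nat \<Rightarrow> 'm nstate" where
  "exec A E t 0 = (\<lambda>v. if t v = 0 then Active [WokeSpont] else Asleep)"
| "exec A E t (Suc r) = step A E t r (exec A E t r)"

fun is_done :: "'m nstate \<Rightarrow> bool" where
  "is_done (Done h) = True"
| "is_done _ = False"

fun final_hist :: "'m nstate \<Rightarrow> 'm obs list" where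
  "final_hist (Done h) = h"
| "final_hist _ = []"

definition all_terminate :: "nat set \<Rightarrow> (nat \<Rightarrow> nat \<Rightarrow> bool) \<Rightarrow> (nat \<Rightarrow> nat) \<Rightarrow> ('m obs list \<Rightarrow> 'm act) \<Rightarrow> bool" where
  "all_terminate V E t A \<longleftrightarrow> (\<exists>r. \<forall>v\<in>V. is_done (exec A E t r v))"

definition alg_time :: "nat set \<Rightarrow> (nat \<Rightarrow> nat \<Rightarrow> bool) \<Rightarrow> (nat \<Rightarrow> nat) \<Rightarrow> ('m obs list \<Rightarrow> 'm act) \<Rightarrow> nat" where
  "alg_time V E t A = (LEAST r. \<forall>v\<in>V. is_done (exec A E t r v))"

definition leader_election :: "nat set \<Rightarrow> (nat \<Rightarrow> nat \<Rightarrow> bool) \<Rightarrow> (nat \<Rightarrow> nat)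
      \<Rightarrow> ('m obs list \<Rightarrow> 'm act) \<Rightarrow> ('m obs list \<Rightarrow> bool) \<Rightarrow> bool" where
  "leader_election V E t A d \<longleftrightarrow>
     all_terminate V E t A \<and>
     card {v \<in> V. d (final_hist (exec A E t (alg_time V E t A) v))} = 1"

text \<open>Messages are natural numbers (w.l.o.g.: histories are countable).\<close>
definition feasible :: "nat set \<Rightarrow> (nat \<Rightarrow> nat \<Rightarrow> bool) \<Rightarrow> (nat \<Rightarrow> nat) \<Rightarrow> bool" where
  "feasible V E t \<longleftrightarrow> (\<exists>(A :: nat obs list \<Rightarrow> nat act) d. leader_election V E t A d)"

end

theory Submission
  imports Defs
begin

text \<open>Take the path 0 - 1 - 2 - 3 with wakeup tags 2k+2, 0, 0, k+1, of span 2k+2.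
It is feasible: the two inner nodes listen for 2k+2 rounds and then transmit together;
node 3 hears them in its local round k+2, node 0 in its local round 1, which breaks the
symmetry. Conversely, a run that ends by round k never observes the tag of node 0, so the
algorithm would behave identically if node 0 had tag k+1. That configuration is invariant
under reversing the path, which has no fixed node, so no single leader can be elected in it.
Hence every leader election for the path takes more than k rounds, about half the span.\<close>

lemma exec_eq_if_late_tags:
  assumes late: "\<And>u. t u \<noteq> t' u \<Longrightarrow> T < t u \<and> T < t' u"
  shows "r \<le> T \<Longrightarrow> exec A E t r = exec A E t' r"
proof (induction r)
  case 0
  have "t u = 0 \<longleftrightarrow> t' u = 0" for u
    using late[of u] by (cases "t u = t' u") auto
  then show ?case by simp
next
  case (Suc r)
  then have same: "exec A E t r = exec A E t' r" by simp
  have tag: "t u = Suc r \<longleftrightarrow> t' u = Suc r" for u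
    using late[of u] Suc.prems by (cases "t u = t' u") auto
  show ?case
  proof
    fix u
    show "exec A E t (Suc r) u = exec A E t' (Suc r) u"
      by (simp add: step_def same tag)
  qed
qed

lemma received_automorphism:
  assumes "bij f" and E_f: "\<And>x y. E (f x) (f y) = E x y" and S_f: "\<And>u. S (f u) = S u"
  shows "received A E S (f v) = received A E S v"
proof -
  define T where "T = {u. E v u \<and> transmits A (S u) \<noteq> None}"
  have image: "{u. E (f v) u \<and> transmits A (S u) \<noteq> None} = f ` T"
  proof
    show "f ` T \<subseteq> {u. E (f v) u \<and> transmits A (S u) \<noteq> None}"
      using E_f S_f by (auto simp: T_def)
    show "{u. E (f v) u \<and> transmits A (S u) \<noteq> None} \<subseteq> f ` T"
    proof
      fix u assume u: "u \<in> {u. E (f v) u \<and> transmits A (S u) \<noteq> None}"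
      obtain w where "u = f w" using \<open>bij f\<close> by (metis bij_is_surj surjD)
      with u show "u \<in> f ` T" using E_f S_f by (auto simp: T_def)
    qed
  qed
  have received_v: "received A E S v = (if T = {} then Silence
      else if card T = 1 then Heard (the (transmits A (S (the_elem T)))) else Noise)"
    unfolding received_def Let_def T_def ..
  have received_fv: "received A E S (f v) = (if f ` T = {} then Silence
      else if card (f ` T) = 1 then Heard (the (transmits A (S (the_elem (f ` T))))) else Noise)"
    unfolding received_def Let_def image ..
  have "card (f ` T) = card T"
    using bij_is_inj[OF \<open>bij f\<close>] by (simp add: card_image inj_on_subset)
  moreover have "S (the_elem (f ` T)) = S (the_elem T)" if "card T = 1"
    using that S_f by (auto simp: card_1_singleton_iff)
  ultimately show ?thesis unfolding received_v received_fv by simp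
qed

lemma exec_automorphism:
  assumes "bij f" "\<And>x y. E (f x) (f y) = E x y" "\<And>u. t (f u) = t u"
  shows "exec A E t r (f u) = exec A E t r u"
proof (induction r arbitrary: u)
  case 0
  then show ?case using assms(3) by simp
next
  case (Suc r)
  have received: "received A E (exec A E t r) (f u) = received A E (exec A E t r) u"
    using assms(1,2) Suc.IH by (rule received_automorphism)
  show ?case
    unfolding exec.simps step_def Suc.IH assms(3) received ..
qed

lemma not_leader_election_if_automorphism:
  assumes "bij f" "\<And>x y. E (f x) (f y) = E x y" "\<And>u. t (f u) = t u"
    and "f ` V \<subseteq> V" "\<And>v. v \<in> V \<Longrightarrow> f v \<noteq> v"
  shows "\<not> leader_election V E t A d"
proof
  assume "leader_election V E t A d"
  then obtain x where leaders: "{v \<in> V. d (final_hist (exec A E t (alg_time V E t A) v))} = {x}"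
    by (auto simp: leader_election_def card_1_singleton_iff)
  then have "x \<in> V" "d (final_hist (exec A E t (alg_time V E t A) x))" by auto
  moreover have "exec A E t (alg_time V E t A) (f x) = exec A E t (alg_time V E t A) x"
    using assms(1-3) by (rule exec_automorphism)
  ultimately have "f x \<in> {v \<in> V. d (final_hist (exec A E t (alg_time V E t A) v))}"
    using assms(4) by auto
  then show False using leaders assms(5) \<open>x \<in> V\<close> by auto
qed

lemma leader_election_if_late_tags:
  assumes le: "leader_election V E t A d"
    and late: "\<And>u. t u \<noteq> t' u \<Longrightarrow> alg_time V E t A < t u \<and> alg_time V E t A < t' u"
  shows "leader_election V E t' A d"
proof -
  let ?T = "alg_time V E t A"
  have same: "r \<le> ?T \<Longrightarrow> exec A E t r = exec A E t' r" for r
    using exec_eq_if_late_tags late by blast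
  have "all_terminate V E t A" using le by (simp add: leader_election_def)
  then have terminated: "\<forall>v\<in>V. is_done (exec A E t ?T v)"
    unfolding all_terminate_def alg_time_def by (rule LeastI_ex)
  have time: "alg_time V E t' A = ?T"
    unfolding alg_time_def[of _ _ t']
  proof (rule Least_equality)
    show "\<forall>v\<in>V. is_done (exec A E t' ?T v)" using terminated same by simp
    show "?T \<le> r" if "\<forall>v\<in>V. is_done (exec A E t' r v)" for r
    proof (cases "r \<le> ?T")
      case True
      then have "\<forall>v\<in>V. is_done (exec A E t r v)" using that same by simp
      then show ?thesis unfolding alg_time_def by (rule Least_le)
    qed simp
  qed
  have "all_terminate V E t' A"
    unfolding all_terminate_def using terminated same[of ?T] by auto
  then show ?thesis using le same[of ?T] time by (simp add: leader_election_def)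
qed

definition path :: "nat \<Rightarrow> nat \<Rightarrow> nat \<Rightarrow> bool" where
  "path n x y \<longleftrightarrow> x < n \<and> y < n \<and> (x = Suc y \<or> y = Suc x)"

definition path_flip :: "nat \<Rightarrow> nat \<Rightarrow> nat" where
  "path_flip n u = (if u < n then n - 1 - u else u)"

lemma bij_path_flip: "bij (path_flip n)"
proof -
  have involution: "path_flip n \<circ> path_flip n = id" by (rule ext) (simp add: path_flip_def)
  show ?thesis by (rule o_bij[OF involution involution])
qed

lemma path_path_flip: "path n (path_flip n x) (path_flip n y) = path n x y"
  by (auto simp: path_def path_flip_def)

lemma path_connected:
  assumes "x < n" "y < n"
  shows "(x, y) \<in> {(a, b). path n a b}\<^sup>*"
proof -
  let ?R = "{(a, b). path n a b}"
  have up: "(i, j) \<in> ?R\<^sup>*" if "i \<le> j" "j < n" for i j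
    using that
  proof (induction j)
    case (Suc j)
    then show ?case
      by (cases "i = Suc j") (auto simp: path_def intro: rtrancl_into_rtrancl)
  qed simp
  have "?R\<inverse> = ?R" by (auto simp: path_def)
  then have "(j, i) \<in> ?R\<^sup>*" if "i \<le> j" "j < n" for i j
    using up[OF that] by (metis rtrancl_converseI)
  with up assms show ?thesis by (cases "x \<le> y") auto
qed

lemma is_config_path:
  assumes "\<exists>v<n. t v = 0" "\<forall>v\<ge>n. t v = 0"
  shows "is_config {..<n} (path n) t"
  using assms path_connected by (auto simp: is_config_def path_def not_less)

definition tags :: "nat \<Rightarrow> nat \<Rightarrow> nat" where
  "tags k v = (if v = 0 then 2*k+2 else if v = 3 then k+1 else 0)"

lemma span_tags: "span {..<4} (tags k) = 2*k+2"
proof -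
  have "tags k ` {..<4} = {2*k+2, 0, k+1}"
    by (auto simp: tags_def lessThan_nat_numeral image_iff)
  then show ?thesis by (simp add: span_def)
qed

lemma inj_tags: "inj tags"
proof (rule injI)
  fix a b assume "tags a = tags b"
  then have "tags a 0 = tags b 0" by simp
  then show "a = b" by (simp add: tags_def)
qed

lemma is_config_tags: "is_config {..<4} (path 4) (tags k)"
  by (rule is_config_path) (auto simp: tags_def intro: exI[of _ 1])

definition elect :: "nat \<Rightarrow> nat obs list \<Rightarrow> nat act" where
  "elect k h = (if length h = 2*k+3 \<and> Heard 0 \<notin> set h then Transmit 0
                else if 2*k+3 < length h then Terminate else Listen)"

text \<open>The last branch also covers the nodes outside the path: they have tag 0 and no
neighbours, so they behave exactly like nodes 1 and 2.\<close>

definition elect_run :: "nat \<Rightarrow> nat \<Rightarrow> nat \<Rightarrow> nat nstate" where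
  "elect_run k r v =
    (if v = 0 then
       (if r < 2*k+2 then Asleep
        else if r = 2*k+2 then Active [WokeSpont]
        else if r \<le> 4*k+5 then Active (WokeSpont # Heard 0 # replicate (r-2*k-3) Silence)
        else Done (WokeSpont # Heard 0 # replicate (2*k+2) Silence))
     else if v = 3 then
       (if r \<le> k then Asleep
        else if r \<le> 2*k+2 then Active (WokeSpont # replicate (r-k-1) Silence)
        else if r \<le> 3*k+4
          then Active (WokeSpont # replicate (k+1) Silence @ Heard 0 # replicate (r-2*k-3) Silence)
        else Done (WokeSpont # replicate (k+1) Silence @ Heard 0 # replicate (k+1) Silence))
     else
       (if r \<le> 2*k+2 then Active (WokeSpont # replicate r Silence)
        else if r = 2*k+3 then Active (WokeSpont # replicate (2*k+2) Silence @ [Sent])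
        else Done (WokeSpont # replicate (2*k+2) Silence @ [Sent])))"

lemma transmits_elect_run:
  "transmits (elect k) (elect_run k r v) = (if v \<noteq> 0 \<and> v \<noteq> 3 \<and> r = 2*k+2 then Some 0 else None)"
  by (auto simp: transmits_def elect_run_def elect_def)

lemma received_elect_run:
  "received (elect k) (path 4) (elect_run k r) v = (if v < 4 \<and> r = 2*k+2 then Heard 0 else Silence)"
proof -
  have "{u. path 4 v u \<and> transmits (elect k) (elect_run k r u) \<noteq> None} =
        (if v < 4 \<and> r = 2*k+2 then {if v = 0 \<or> v = 2 then 1 else 2} else {})"
    by (auto simp: transmits_elect_run path_def)
  then show ?thesis by (simp add: received_def transmits_elect_run)
qed

lemma step_elect_run:
  "step (elect k) (path 4) (tags k) r (elect_run k r) v = elect_run k (Suc r) v"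
proof -
  note defs = step_def received_elect_run elect_run_def elect_def tags_def replicate_append_same
  consider "v = 0" | "v = 3" | "v \<noteq> 0" "v \<noteq> 3" by blast
  then show ?thesis
  proof cases
    case 1
    consider "r \<le> 2*k+2" | j where "r = 2*k+3+j" "j \<le> 2*k+1" | "r = 4*k+5" | "4*k+5 < r"
    proof -
      have "r \<le> 2*k+2 \<or> r = 2*k+3+(r-2*k-3) \<and> r-2*k-3 \<le> 2*k+1 \<or> r = 4*k+5 \<or> 4*k+5 < r"
        by linarith
      then show ?thesis using that by blast
    qed
    then show ?thesis using 1 by cases (auto simp: defs)
  next
    case 2
    consider "r \<le> k" | j where "r = k+1+j" "j \<le> k" | "r = 2*k+2"
      | j where "r = 2*k+3+j" "j \<le> k" | "r = 3*k+4" | "3*k+4 < r"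
    proof -
      have "r \<le> k \<or> r = k+1+(r-k-1) \<and> r-k-1 \<le> k \<or> r = 2*k+2 \<or>
            r = 2*k+3+(r-2*k-3) \<and> r-2*k-3 \<le> k \<or> r = 3*k+4 \<or> 3*k+4 < r"
        by linarith
      then show ?thesis using that by blast
    qed
    then show ?thesis using 2 by cases (auto simp: defs)
  next
    case 3
    then show ?thesis by (cases "r \<le> 2*k+1") (auto simp: defs)
  qed
qed

lemma exec_elect: "exec (elect k) (path 4) (tags k) r = elect_run k r"
proof (induction r)
  case 0
  show ?case by (auto simp: elect_run_def tags_def)
next
  case (Suc r)
  then show ?case by (auto simp: step_elect_run)
qed

lemma is_done_elect_run_0: "is_done (elect_run k r 0) \<longleftrightarrow> 4*k+6 \<le> r"
  by (simp add: elect_run_def)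

lemma is_done_elect_run: "4*k+6 \<le> r \<Longrightarrow> is_done (elect_run k r v)"
  by (simp add: elect_run_def)

definition elect_leader :: "nat \<Rightarrow> nat obs list \<Rightarrow> bool" where
  "elect_leader k h \<longleftrightarrow> h ! (k+2) = Heard 0"

lemma elect_leader_iff: "elect_leader k (final_hist (elect_run k (4*k+6) v)) \<longleftrightarrow> v = 3"
  by (auto simp: elect_leader_def elect_run_def nth_append nth_Cons')

lemma alg_time_elect: "alg_time {..<4} (path 4) (tags k) (elect k) = 4*k+6"
  unfolding alg_time_def exec_elect
proof (rule Least_equality)
  show "\<forall>v\<in>{..<4}. is_done (elect_run k (4*k+6) v)" by (simp add: is_done_elect_run)
  show "4*k+6 \<le> r" if "\<forall>v\<in>{..<4}. is_done (elect_run k r v)" for r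
    using that[rule_format, of 0] by (simp add: is_done_elect_run_0)
qed

lemma leader_election_elect:
  "leader_election {..<4} (path 4) (tags k) (elect k) (elect_leader k)"
proof -
  have "all_terminate {..<4} (path 4) (tags k) (elect k)"
    unfolding all_terminate_def exec_elect using is_done_elect_run by blast
  moreover have "{v \<in> {..<4}. elect_leader k (final_hist (elect_run k (4*k+6) v))} = {3}"
    by (auto simp: elect_leader_iff)
  ultimately show ?thesis by (simp add: leader_election_def alg_time_elect exec_elect)
qed

lemma alg_time_gt_if_leader_election:
  assumes "leader_election {..<4} (path 4) (tags k) A d"
  shows "k < alg_time {..<4} (path 4) (tags k) A"
proof (rule ccontr)
  let ?t = "(tags k)(0 := k+1)"
  assume "\<not> k < alg_time {..<4} (path 4) (tags k) A"
  have "leader_election {..<4} (path 4) ?t A d"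
    using assms by (rule leader_election_if_late_tags)
      (use \<open>\<not> k < _\<close> in \<open>auto simp: tags_def split: if_split_asm\<close>)
  moreover have "\<not> leader_election {..<4} (path 4) ?t A d"
  proof (rule not_leader_election_if_automorphism)
    show "bij (path_flip 4)" by (rule bij_path_flip)
    show "path 4 (path_flip 4 x) (path_flip 4 y) = path 4 x y" for x y by (rule path_path_flip)
    show "?t (path_flip 4 u) = ?t u" for u by (auto simp: path_flip_def tags_def)
    show "path_flip 4 ` {..<4} \<subseteq> {..<4}" by (auto simp: path_flip_def)
    show "path_flip 4 v \<noteq> v" if "v \<in> {..<4}" for v
      using that by (simp add: path_flip_def) presburger
  qed
  ultimately show False by contradiction
qed

theorem proposition3:
  shows "\<exists>C :: ((nat \<Rightarrow> nat \<Rightarrow> bool) \<times> (nat \<Rightarrow> nat)) set.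
           infinite C \<and>
           (\<forall>(E, t) \<in> C. is_config {..<4} E t \<and> feasible {..<4} E t) \<and>
           (\<exists>c :: real. c > 0 \<and> (\<exists>s0. \<forall>(E, t) \<in> C. span {..<4} t \<ge> s0 \<longrightarrow>
              (\<forall>(A :: nat obs list \<Rightarrow> nat act) d. leader_election {..<4} E t A d \<longrightarrow>
                 real (alg_time {..<4} E t A) \<ge> c * real (span {..<4} t))))"
proof (intro exI conjI)
  let ?C = "range (\<lambda>k. (path 4, tags k))"
  have "inj (\<lambda>k. (path 4, tags k))"
    using inj_tags by (simp add: inj_def)
  then show "infinite ?C" by (metis finite_imageD infinite_UNIV_nat)
  show "\<forall>(E, t) \<in> ?C. is_config {..<4} E t \<and> feasible {..<4} E t"
    using is_config_tags leader_election_elect by (auto simp: feasible_def)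
  show "\<forall>(E, t) \<in> ?C. 0 \<le> span {..<4} t \<longrightarrow>
          (\<forall>(A :: nat obs list \<Rightarrow> nat act) d. leader_election {..<4} E t A d \<longrightarrow>
             real (alg_time {..<4} E t A) \<ge> 1/2 * real (span {..<4} t))"
  proof clarify
    fix k and A :: "nat obs list \<Rightarrow> nat act" and d
    assume "leader_election {..<4} (path 4) (tags k) A d"
    then have "k < alg_time {..<4} (path 4) (tags k) A"
      by (rule alg_time_gt_if_leader_election)
    then show "1/2 * real (span {..<4} (tags k)) \<le> real (alg_time {..<4} (path 4) (tags k) A)"
      by (simp add: span_tags)
  qed
qed simp

end
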